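(* Suppose there exists a constant $C$ such that for all positive integers $k$ we have $\mathrm{LCS}_2(2k,\mathcal P_k)\leq Ck^{1/3}$. Then for all $k\geq 2$, $\mathrm{LT}(k,n)\leq 6Ck^{-2/3}n+o(n)$ as $n\to\infty$.
   Context: $\mathcal{P}_k$ is the set of permutations on $k$ letters (words over $[k]=\{1,\dots,k\}$ in which each letter occurs exactly once). $\mathrm{LCS}(w,w')$ is the length of a longest common subsequence of words $w,w'$; $\mathrm{LCS}_2(t,\mathcal P_k)$ is the minimum, over sets of $t$ distinct permutations in $\mathcal P_k$, of the maximum $\mathrm{LCS}$ of two distinct members. Two subsequences of a word $w$ are twins if they are equal as words and use disjoint sets of positions of $w$; $\mathrm{LT}(w)$ is the maximum length of twins in $w$ and $\mathrm{LT}(k,n)=\min_{w\in[k]^n}\mathrm{LT}(w)$. *)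

theory Defs
  imports Complex_Main "HOL-Library.Sublist" "HOL-Library.Landau_Symbols"
begin

definition perms :: "nat \<Rightarrow> nat list set" where
  "perms k = {w. distinct w \<and> set w = {1..k}}"

definition LCS :: "nat list \<Rightarrow> nat list \<Rightarrow> nat" where
  "LCS w w' = Max {length u | u. subseq u w \<and> subseq u w'}"

definition LCS2_perms :: "nat \<Rightarrow> nat \<Rightarrow> nat" where
  "LCS2_perms t k = Min {Max {LCS p q | p q. p \<in> S \<and> q \<in> S \<and> p \<noteq> q} | S.
       S \<subseteq> perms k \<and> card S = t}"

definition twins_len :: "nat list \<Rightarrow> nat set" where
  "twins_len w = {card I | I J. I \<subseteq> {..<length w} \<and> J \<subseteq> {..<length w} \<and>
       I \<inter> J = {} \<and> nths w I = nths w J}"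

definition LT :: "nat list \<Rightarrow> nat" where
  "LT w = Max (twins_len w)"

definition LT_kn :: "nat \<Rightarrow> nat \<Rightarrow> nat" where
  "LT_kn k n = Min {LT w | w. length w = n \<and> set w \<subseteq> {1..k}}"

end

(* Twins in a word correspond to strict chains of pairs of equal-letter positions (twin
   matchings). Words over [K] are built recursively: the word of length m is the word of length
   \<lceil>m/K\<rceil> over [2K] with each letter replaced by one of 2K permutations of [K] whose pairwise
   LCS is at most L = LCS_2(2K, P_K). Cutting positions into blocks of length K, a chain meets at
   most 2\<lceil>m/K\<rceil> pairs of blocks. Blocks carrying different letters share at most L matches;
   pairs of blocks carrying equal letters are covered by rows and columns that are paid for by a
   chain of matches in the coarser word, at cost K each. So the largest twin matching T_K(m)
   satisfies T_K(m) \<le> 2\<lceil>m/K\<rceil> L + K T_2K(\<lceil>m/K\<rceil>), and with L \<le> C K^(1/3) and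
   2 + 6 \<cdot> 2^(-2/3) < 6 this gives T_K(m) \<le> 6 C K^(-2/3) m + O(1). *)

theory Submission
  imports Defs "HOL-Combinatorics.Multiset_Permutations"
begin

section \<open>Twins as strict chains of matched positions\<close>

definition strict_chain :: "(nat \<times> nat) set \<Rightarrow> bool" where
  "strict_chain P \<longleftrightarrow> (\<forall>p\<in>P. \<forall>q\<in>P. p \<noteq> q \<longrightarrow>
      (fst p < fst q \<and> snd p < snd q) \<or> (fst q < fst p \<and> snd q < snd p))"

text \<open>Pairing the k-th positions of two twins gives a twin matching; only this direction
  is needed, since twin matchings are only used to bound \<open>LT\<close> from above.\<close>

definition twin_matching :: "nat list \<Rightarrow> (nat \<times> nat) set \<Rightarrow> bool" where
  "twin_matching w P \<longleftrightarrow> finite P \<and> strict_chain P \<and>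
     (\<forall>(i, j)\<in>P. i < length w \<and> j < length w \<and> i \<noteq> j \<and> w ! i = w ! j)"

lemma strict_chain_subset: "strict_chain P \<Longrightarrow> Q \<subseteq> P \<Longrightarrow> strict_chain Q"
  unfolding strict_chain_def by blast

lemma strict_chain_inj_on_fst: "strict_chain P \<Longrightarrow> inj_on fst P"
  unfolding strict_chain_def inj_on_def by fastforce

lemma strict_chain_inj_on_snd: "strict_chain P \<Longrightarrow> inj_on snd P"
  unfolding strict_chain_def inj_on_def by fastforce

lemma nths_eq_map_nth_filter: "nths xs I = map (nth xs) (filter (\<lambda>i. i \<in> I) [0..<length xs])"
proof (induction xs rule: rev_induct)
  case (snoc x xs)
  have "map (nth (xs @ [x])) (filter (\<lambda>i. i \<in> I) [0..<length xs])
      = map (nth xs) (filter (\<lambda>i. i \<in> I) [0..<length xs])"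
    by (rule map_cong) (auto simp: nth_append)
  with snoc show ?case by (simp add: nths_append)
qed simp

lemma strict_chain_set_zip:
  assumes "sorted_wrt (<) a" "sorted_wrt (<) b" "length a = length b"
  shows "strict_chain (set (zip a b))"
  unfolding strict_chain_def
proof (intro ballI impI)
  fix p q assume "p \<in> set (zip a b)" "q \<in> set (zip a b)" "p \<noteq> q"
  then obtain k l where "k < length a" "p = (a ! k, b ! k)" "l < length a" "q = (a ! l, b ! l)"
    using assms(3) by (metis in_set_zip prod.collapse)
  moreover have "k \<noteq> l" using calculation \<open>p \<noteq> q\<close> by auto
  ultimately show "(fst p < fst q \<and> snd p < snd q) \<or> (fst q < fst p \<and> snd q < snd p)"
    using assms by (metis fst_conv snd_conv sorted_wrt_nth_less linorder_neqE_nat)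
qed

lemma twin_matching_of_twins:
  assumes I: "I \<subseteq> {..<length w}" and J: "J \<subseteq> {..<length w}"
    and disj: "I \<inter> J = {}" and eq: "nths w I = nths w J"
  shows "\<exists>P. twin_matching w P \<and> card P = card I"
proof -
  define a where "a = filter (\<lambda>i. i \<in> I) [0..<length w]"
  define b where "b = filter (\<lambda>i. i \<in> J) [0..<length w]"
  have ab: "map (nth w) a = map (nth w) b"
    using eq by (simp add: nths_eq_map_nth_filter a_def b_def)
  then have len: "length a = length b" by (metis length_map)
  have "length a = length (nths w I)" by (simp add: nths_eq_map_nth_filter a_def)
  also have "\<dots> = card {i. i < length w \<and> i \<in> I}" by (rule length_nths)
  also have "{i. i < length w \<and> i \<in> I} = I" using I by auto
  finally have card_I: "length a = card I" .
  have "strict_chain (set (zip a b))"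
    using len unfolding a_def b_def by (intro strict_chain_set_zip) (simp_all add: sorted_wrt_filter)
  moreover have "i < length w \<and> j < length w \<and> i \<noteq> j \<and> w ! i = w ! j"
    if ij: "(i, j) \<in> set (zip a b)" for i j
  proof -
    obtain k where k: "k < length b" "i = a ! k" "j = b ! k" using ij len by (auto simp: in_set_zip)
    have "i \<in> I" "j \<in> J" "i < length w" "j < length w"
      using k len nth_mem[of k a] nth_mem[of k b] by (auto simp: a_def b_def)
    moreover have "w ! i = w ! j" using k len ab by (metis nth_map)
    ultimately show ?thesis using disj by auto
  qed
  ultimately have "twin_matching w (set (zip a b))" unfolding twin_matching_def by auto
  moreover have "card (set (zip a b)) = card I"
    using len card_I by (simp add: distinct_card distinct_zipI1 a_def)
  ultimately show ?thesis by blast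
qed

lemma twins_len_subset_atMost: "twins_len w \<subseteq> {..length w}"
  unfolding twins_len_def using card_mono[of "{..<length w}"] by fastforce

lemma zero_in_twins_len: "0 \<in> twins_len w"
  unfolding twins_len_def by force

lemma LT_in_twins_len: "LT w \<in> twins_len w"
  unfolding LT_def
  using twins_len_subset_atMost zero_in_twins_len by (intro Max_in) (auto intro: finite_subset)

lemma LT_twin_matching: "\<exists>P. twin_matching w P \<and> card P = LT w"
  using LT_in_twins_len[of w] twin_matching_of_twins unfolding twins_len_def by force

lemma two_LT_le_length: "2 * LT w \<le> length w"
proof -
  obtain I J where IJ: "LT w = card I" "I \<subseteq> {..<length w}" "J \<subseteq> {..<length w}"
       "I \<inter> J = {}" "nths w I = nths w J"
    using LT_in_twins_len[of w] unfolding twins_len_def by blast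
  have "length (nths w K) = card K" if "K \<subseteq> {..<length w}" for K
    using that by (auto simp: length_nths intro!: arg_cong[where f = card])
  hence "card I = card J" using IJ by metis
  moreover have "card (I \<union> J) = card I + card J"
    using IJ by (intro card_Un_disjoint) (auto intro: finite_subset)
  moreover have "card (I \<union> J) \<le> length w"
    using IJ card_mono[of "{..<length w}" "I \<union> J"] by simp
  ultimately show ?thesis using IJ(1) by linarith
qed

lemma LT_kn_le_LT:
  assumes "length w = n" "set w \<subseteq> {1..k}"
  shows "LT_kn k n \<le> LT w"
proof -
  have "{LT w | w. length w = n \<and> set w \<subseteq> {1..k}} = LT ` {w. set w \<subseteq> {1..k} \<and> length w = n}"
    by auto
  moreover have "finite {w. set w \<subseteq> {1..k} \<and> length w = n}"
    by (rule finite_lists_length_eq) simp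
  ultimately show ?thesis unfolding LT_kn_def using assms by (auto intro: Min_le)
qed

section \<open>Longest common subsequences from chains\<close>

lemma strict_chain_common_subseq:
  assumes "finite Q" "strict_chain Q" "\<forall>(a, b)\<in>Q. a < length xs \<and> b < length ys \<and> xs ! a = ys ! b"
  shows "\<exists>z. subseq z xs \<and> subseq z ys \<and> length z = card Q"
  using assms
proof (induction "card Q" arbitrary: Q xs ys)
  case 0
  then show ?case by (intro exI[of _ "[]"]) auto
next
  case (Suc n)
  text \<open>Remove the last matched pair and recurse on the prefixes before it.\<close>
  obtain a0 b0 where p0: "(a0, b0) \<in> Q" and a0: "a0 = Max (fst ` Q)"
    using Suc.hyps(2) Suc.prems(1) Max_in[of "fst ` Q"] by fastforce
  have below: "a < a0 \<and> b < b0" if "(a, b) \<in> Q - {(a0, b0)}" for a b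
    using that p0 Suc.prems(1,2) unfolding a0 strict_chain_def
    by (metis DiffE Max_ge finite_imageI fst_conv image_eqI not_le singletonI snd_conv)
  define Q' where "Q' = Q - {(a0, b0)}"
  have card_Q': "n = card Q'" unfolding Q'_def using Suc.hyps(2) Suc.prems(1) p0 by simp
  have "\<forall>(a, b)\<in>Q'. a < length (take a0 xs) \<and> b < length (take b0 ys) \<and> take a0 xs ! a = take b0 ys ! b"
    using below Suc.prems(3) unfolding Q'_def by fastforce
  moreover have "finite Q'" "strict_chain Q'"
    using Suc.prems(1) strict_chain_subset[OF Suc.prems(2)] unfolding Q'_def by auto
  ultimately obtain z where z: "subseq z (take a0 xs)" "subseq z (take b0 ys)" "length z = n"
    using Suc.hyps(1)[OF card_Q'] card_Q' by blast
  have ab: "a0 < length xs" "b0 < length ys" "xs ! a0 = ys ! b0" using Suc.prems(3) p0 by auto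
  have "subseq (z @ [xs ! a0]) (take (Suc a0) xs)" "subseq (z @ [ys ! b0]) (take (Suc b0) ys)"
    using z ab by (simp_all add: list_emb_append_mono take_Suc_conv_app_nth)
  hence "subseq (z @ [xs ! a0]) xs" "subseq (z @ [xs ! a0]) ys"
    using ab(3) by (metis prefix_imp_subseq subseq_order.order_trans take_is_prefix)+
  then show ?case using z(3) Suc.hyps(2) by (intro exI[of _ "z @ [xs ! a0]"]) simp
qed

lemma length_le_LCS:
  assumes "subseq z xs" "subseq z ys"
  shows "length z \<le> LCS xs ys"
proof -
  have "{length u | u. subseq u xs \<and> subseq u ys} \<subseteq> {..length xs}"
    by (auto dest: list_emb_length)
  hence "finite {length u | u. subseq u xs \<and> subseq u ys}" by (rule finite_subset) simp
  thus ?thesis unfolding LCS_def using assms by (intro Max_ge) auto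
qed

lemma card_strict_chain_le_LCS:
  assumes "finite Q" "strict_chain Q" "\<forall>(a, b)\<in>Q. a < length xs \<and> b < length ys \<and> xs ! a = ys ! b"
  shows "card Q \<le> LCS xs ys"
  using strict_chain_common_subseq[OF assms] length_le_LCS by metis

section \<open>Covering weak chains by rows and columns\<close>

definition weak_chain :: "(nat \<times> nat) set \<Rightarrow> bool" where
  "weak_chain E \<longleftrightarrow> (\<forall>c\<in>E. \<forall>d\<in>E.
      (fst c \<le> fst d \<and> snd c \<le> snd d) \<or> (fst d \<le> fst c \<and> snd d \<le> snd c))"

lemma weak_chain_subset: "weak_chain E \<Longrightarrow> F \<subseteq> E \<Longrightarrow> weak_chain F"
  unfolding weak_chain_def by blast

lemma weak_chain_greatest:
  assumes "finite E" "E \<noteq> {}" "weak_chain E"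
  obtains p where "p \<in> E" "\<And>c. c \<in> E \<Longrightarrow> fst c \<le> fst p \<and> snd c \<le> snd p"
proof -
  obtain p where p: "p \<in> E" "fst p + snd p = Max ((\<lambda>c. fst c + snd c) ` E)"
    using assms(1,2) Max_in[of "(\<lambda>c. fst c + snd c) ` E"] by fastforce
  have "fst c \<le> fst p \<and> snd c \<le> snd p" if "c \<in> E" for c
  proof -
    have "fst c + snd c \<le> fst p + snd p" using p(2) assms(1) that by simp
    moreover have "(fst c \<le> fst p \<and> snd c \<le> snd p) \<or> (fst p \<le> fst c \<and> snd p \<le> snd c)"
      using assms(3) p(1) that unfolding weak_chain_def by blast
    ultimately show ?thesis by auto
  qed
  with p(1) that show ?thesis by blast
qed

text \<open>If \<open>p\<close> is the greatest element, the elements not strictly below \<open>p\<close> share its row or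
  its column; if two of them shared only the row and only the column respectively, they
  would be incomparable.\<close>

lemma weak_chain_above_greatest:
  assumes "weak_chain E" "p \<in> E" and top: "\<And>c. c \<in> E \<Longrightarrow> fst c \<le> fst p \<and> snd c \<le> snd p"
  defines "U \<equiv> {c\<in>E. \<not> (fst c < fst p \<and> snd c < snd p)}"
  shows "(\<forall>c\<in>U. fst c = fst p) \<or> (\<forall>c\<in>U. snd c = snd p)"
proof (cases "\<exists>c0\<in>E. c0 \<noteq> p \<and> fst c0 = fst p")
  case True
  then obtain c0 where c0: "c0 \<in> E" "c0 \<noteq> p" "fst c0 = fst p" by blast
  have "snd c0 \<noteq> snd p" using c0(2,3) by (simp add: prod_eq_iff)
  hence "snd c0 < snd p" using top[OF c0(1)] by simp
  have "fst c = fst p" if "c \<in> U" for c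
  proof -
    have "c \<in> E" "fst c \<le> fst p" "snd c \<le> snd p" "\<not> (fst c < fst p \<and> snd c < snd p)"
      using that top unfolding U_def by auto
    moreover have "(fst c \<le> fst c0 \<and> snd c \<le> snd c0) \<or> (fst c0 \<le> fst c \<and> snd c0 \<le> snd c)"
      using assms(1) c0(1) \<open>c \<in> E\<close> unfolding weak_chain_def by blast
    ultimately show ?thesis using \<open>snd c0 < snd p\<close> c0(3) by arith
  qed
  then show ?thesis by blast
next
  case False
  have "snd c = snd p" if "c \<in> U" for c
  proof (cases "fst c = fst p")
    case True
    with False that have "c = p" unfolding U_def by blast
    then show ?thesis by simp
  next
    case False
    have "c \<in> E" "\<not> (fst c < fst p \<and> snd c < snd p)" using that unfolding U_def by auto
    with top[of c] False show ?thesis by auto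
  qed
  then show ?thesis by blast
qed

lemma card_insert_le_Suc: "finite A \<Longrightarrow> card (insert a A) \<le> Suc (card A)"
  by (simp add: card_insert_if)

lemma weak_chain_cover:
  assumes "finite E" "weak_chain E"
  shows "\<exists>S R C. S \<subseteq> E \<and> strict_chain S \<and> finite S \<and> finite R \<and> finite C \<and>
           card R + card C \<le> card S \<and> (\<forall>c\<in>E. fst c \<in> R \<or> snd c \<in> C)"
  using assms
proof (induction E rule: finite_psubset_induct)
  case (psubset E)
  show ?case
  proof (cases "E = {}")
    case True
    then show ?thesis by (intro exI[of _ "{}"]) (auto simp: strict_chain_def)
  next
    case False
    obtain p where p: "p \<in> E" and top: "\<And>c. c \<in> E \<Longrightarrow> fst c \<le> fst p \<and> snd c \<le> snd p"
      using weak_chain_greatest[OF psubset.hyps False psubset.prems] by blast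
    define E' where "E' = {c\<in>E. fst c < fst p \<and> snd c < snd p}"
    have "E' \<subset> E" "weak_chain E'"
      using p weak_chain_subset[OF psubset.prems] unfolding E'_def by auto
    then have "\<exists>S R C. S \<subseteq> E' \<and> strict_chain S \<and> finite S \<and> finite R \<and> finite C \<and>
        card R + card C \<le> card S \<and> (\<forall>c\<in>E'. fst c \<in> R \<or> snd c \<in> C)"
      by (rule psubset.IH)
    then obtain S R C where S: "S \<subseteq> E'" "strict_chain S" "finite S" and RC: "finite R" "finite C"
      "card R + card C \<le> card S" "\<forall>c\<in>E'. fst c \<in> R \<or> snd c \<in> C"
      by blast
    have S': "insert p S \<subseteq> E" "strict_chain (insert p S)" "finite (insert p S)"
      using S p unfolding strict_chain_def E'_def by auto
    have "p \<notin> S" using S(1) unfolding E'_def by auto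
    with S(3) have card_S': "card (insert p S) = Suc (card S)" by simp
    from weak_chain_above_greatest[OF psubset.prems p top]
    consider "\<forall>c\<in>E - E'. fst c = fst p" | "\<forall>c\<in>E - E'. snd c = snd p"
      unfolding E'_def by blast
    then show ?thesis
    proof cases
      case 1
      then have cover: "\<forall>c\<in>E. fst c \<in> insert (fst p) R \<or> snd c \<in> C" using RC(4) by blast
      have card: "card (insert (fst p) R) + card C \<le> card (insert p S)"
        using card_insert_le_Suc[OF RC(1), of "fst p"] RC(3) card_S' by linarith
      show ?thesis
        by (rule exI[of _ "insert p S"], rule exI[of _ "insert (fst p) R"], rule exI[of _ C])
          (use S' RC cover card in simp)
    next
      case 2
      then have cover: "\<forall>c\<in>E. fst c \<in> R \<or> snd c \<in> insert (snd p) C" using RC(4) by blast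
      have card: "card R + card (insert (snd p) C) \<le> card (insert p S)"
        using card_insert_le_Suc[OF RC(2), of "snd p"] RC(3) card_S' by linarith
      show ?thesis
        by (rule exI[of _ "insert p S"], rule exI[of _ R], rule exI[of _ "insert (snd p) C"])
          (use S' RC cover card in simp)
    qed
  qed
qed

lemma card_weak_chain_le:
  assumes "weak_chain E" "\<forall>c\<in>E. fst c < q \<and> snd c < q"
  shows "card E \<le> 2 * q"
proof -
  have "inj_on (\<lambda>c. fst c + snd c) E"
  proof (rule inj_onI)
    fix c d assume cd: "c \<in> E" "d \<in> E" "fst c + snd c = fst d + snd d"
    have "(fst c \<le> fst d \<and> snd c \<le> snd d) \<or> (fst d \<le> fst c \<and> snd d \<le> snd c)"
      using assms(1) cd(1,2) unfolding weak_chain_def by blast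
    with cd(3) have "fst c = fst d \<and> snd c = snd d" by linarith
    then show "c = d" by (simp add: prod_eq_iff)
  qed
  moreover have "(\<lambda>c. fst c + snd c) ` E \<subseteq> {..<2 * q}" using assms(2) by fastforce
  ultimately have "card E \<le> card {..<2 * q}" by (intro card_inj_on_le) auto
  then show ?thesis by simp
qed

section \<open>Twin matchings in concatenations of permutations\<close>

lemma perms_iff: "xs \<in> perms K \<longleftrightarrow> length xs = K \<and> distinct xs \<and> set xs = {1..K}"
  unfolding perms_def using distinct_card[of xs] by auto

lemma length_concat_map_const:
  "\<forall>x\<in>set u. length (\<sigma> x) = K \<Longrightarrow> length (concat (map \<sigma> u)) = K * length u"
  by (induction u) auto

lemma nth_concat_map_const:
  assumes "\<forall>x\<in>set u. length (\<sigma> x) = K" "p < K * length u"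
  shows "concat (map \<sigma> u) ! p = \<sigma> (u ! (p div K)) ! (p mod K)"
  using assms
proof (induction u arbitrary: p)
  case (Cons x u)
  have len: "length (\<sigma> x) = K" using Cons.prems by simp
  show ?case
  proof (cases "p < K")
    case True
    then show ?thesis using len by (simp add: nth_append)
  next
    case False
    then have "K > 0" using Cons.prems(2) by (cases K) auto
    have "p - K < K * length u" using False Cons.prems(2) by simp
    moreover have "p div K = Suc ((p - K) div K)" "p mod K = (p - K) mod K"
      using False \<open>K > 0\<close> by (simp_all add: le_div_geq le_mod_geq)
    ultimately show ?thesis using False len Cons by (simp add: nth_append)
  qed
qed simp

lemma mod_less_mod_of_div_eq: "(a::nat) < b \<Longrightarrow> a div K = b div K \<Longrightarrow> a mod K < b mod K"
  by (metis add_less_cancel_left div_mult_mod_eq)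

lemma eq_of_div_eq_mod_eq: "(a::nat) div K = b div K \<Longrightarrow> a mod K = b mod K \<Longrightarrow> a = b"
  by (metis div_mult_mod_eq)

text \<open>Positions of \<open>concat (map \<sigma> u)\<close> are grouped into blocks of length \<open>K\<close>, one block per
  letter of \<open>u\<close>; position \<open>i\<close> lies in block \<open>i div K\<close> at offset \<open>i mod K\<close>.\<close>

lemma twin_matching_concat_perms_pair:
  assumes perms: "\<forall>x\<in>set u. \<sigma> x \<in> perms K"
    and match: "twin_matching (concat (map \<sigma> u)) P" and ij: "(i, j) \<in> P"
  shows "i div K < length u \<and> j div K < length u \<and> i div K \<noteq> j div K \<and>
         \<sigma> (u ! (i div K)) ! (i mod K) = \<sigma> (u ! (j div K)) ! (j mod K)"
proof -
  have lens: "\<forall>x\<in>set u. length (\<sigma> x) = K" using perms perms_iff by blast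
  have bounds: "i < K * length u" "j < K * length u" "i \<noteq> j"
    and letters: "concat (map \<sigma> u) ! i = concat (map \<sigma> u) ! j"
    using match ij length_concat_map_const[OF lens] unfolding twin_matching_def by auto
  have blocks: "i div K < length u" "j div K < length u"
    using bounds by (simp_all add: less_mult_imp_div_less mult.commute)
  have eq: "\<sigma> (u ! (i div K)) ! (i mod K) = \<sigma> (u ! (j div K)) ! (j mod K)"
    using letters nth_concat_map_const[OF lens] bounds by simp
  have "i div K \<noteq> j div K"
  proof
    assume same: "i div K = j div K"
    define x where "x = u ! (i div K)"
    have "x \<in> set u" using blocks unfolding x_def by simp
    moreover have "K > 0" using bounds by (cases K) auto
    ultimately have "distinct (\<sigma> x)" "i mod K < length (\<sigma> x)" "j mod K < length (\<sigma> x)"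
      using perms lens by (auto simp: perms_iff)
    moreover have "\<sigma> x ! (i mod K) = \<sigma> x ! (j mod K)" using eq same unfolding x_def by simp
    ultimately have "i mod K = j mod K" by (simp add: nth_eq_iff_index_eq)
    with same bounds(3) show False using eq_of_div_eq_mod_eq by blast
  qed
  with blocks eq show ?thesis by blast
qed

lemma card_block_pairs_le_LCS:
  assumes perms: "\<forall>x\<in>set u. \<sigma> x \<in> perms K" and match: "twin_matching (concat (map \<sigma> u)) P"
  shows "card {p\<in>P. fst p div K = A \<and> snd p div K = B} \<le> LCS (\<sigma> (u ! A)) (\<sigma> (u ! B))"
proof -
  define F where "F = {p\<in>P. fst p div K = A \<and> snd p div K = B}"
  define offsets where "offsets = (\<lambda>p::nat \<times> nat. (fst p mod K, snd p mod K))"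
  have P: "finite P" "strict_chain P" using match unfolding twin_matching_def by auto
  have "inj_on offsets F"
  proof (rule inj_onI)
    fix p p' assume "p \<in> F" "p' \<in> F" "offsets p = offsets p'"
    then have "fst p = fst p'" "p \<in> P" "p' \<in> P"
      using eq_of_div_eq_mod_eq[of "fst p" K "fst p'"] unfolding F_def offsets_def by auto
    then show "p = p'" using strict_chain_inj_on_fst[OF P(2)] by (auto dest: inj_onD)
  qed
  then have "card F = card (offsets ` F)" by (simp add: card_image)
  also have "\<dots> \<le> LCS (\<sigma> (u ! A)) (\<sigma> (u ! B))"
  proof (rule card_strict_chain_le_LCS)
    show "finite (offsets ` F)" using P(1) unfolding F_def by simp
    show "strict_chain (offsets ` F)"
      using P(2) unfolding strict_chain_def F_def offsets_def
      by (fastforce intro: mod_less_mod_of_div_eq)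
    show "\<forall>(a, b)\<in>offsets ` F. a < length (\<sigma> (u ! A)) \<and> b < length (\<sigma> (u ! B)) \<and>
        \<sigma> (u ! A) ! a = \<sigma> (u ! B) ! b"
    proof
      fix x assume "x \<in> offsets ` F"
      then obtain i j where ij: "(i, j) \<in> P" "i div K = A" "j div K = B"
        and x: "x = (i mod K, j mod K)" unfolding F_def offsets_def by auto
      note pair = twin_matching_concat_perms_pair[OF perms match ij(1)]
      have "K > 0" using pair by (cases K) auto
      moreover have "length (\<sigma> (u ! A)) = K" "length (\<sigma> (u ! B)) = K"
        using pair ij perms by (auto simp: perms_iff)
      ultimately show "case x of (a, b) \<Rightarrow> a < length (\<sigma> (u ! A)) \<and> b < length (\<sigma> (u ! B)) \<and>
          \<sigma> (u ! A) ! a = \<sigma> (u ! B) ! b"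
        using pair ij x by simp
    qed
  qed
  finally show ?thesis unfolding F_def .
qed

lemma strict_chain_blocks_weak_chain:
  assumes "strict_chain P"
  shows "weak_chain ((\<lambda>p. (fst p div K, snd p div K)) ` P)"
  unfolding weak_chain_def
proof (intro ballI)
  fix c d assume "c \<in> (\<lambda>p. (fst p div K, snd p div K)) ` P" "d \<in> (\<lambda>p. (fst p div K, snd p div K)) ` P"
  then obtain p p' where pp: "p \<in> P" "p' \<in> P" "c = (fst p div K, snd p div K)" "d = (fst p' div K, snd p' div K)"
    by blast
  have "(fst p \<le> fst p' \<and> snd p \<le> snd p') \<or> (fst p' \<le> fst p \<and> snd p' \<le> snd p)"
    using assms pp(1,2) unfolding strict_chain_def by (cases "p = p'") force+
  with pp(3,4) show "(fst c \<le> fst d \<and> snd c \<le> snd d) \<or> (fst d \<le> fst c \<and> snd d \<le> snd c)"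
    by (auto intro: div_le_mono)
qed

lemma card_div_mem_le:
  assumes "finite R" "K > 0" "inj_on h P"
  shows "card {p\<in>P. h p div K \<in> R} \<le> K * card R"
proof -
  have "h ` {p\<in>P. h p div K \<in> R} \<subseteq> (\<Union>A\<in>R. {A * K..<A * K + K})"
  proof clarify
    fix p assume "p \<in> P" "h p div K \<in> R"
    moreover have "h p div K * K \<le> h p" "h p < h p div K * K + K"
      using div_mult_mod_eq[of "h p" K] mod_less_divisor[OF assms(2), of "h p"] by linarith+
    ultimately show "h p \<in> (\<Union>A\<in>R. {A * K..<A * K + K})" by (intro UN_I[of "h p div K"]) auto
  qed
  then have "card (h ` {p\<in>P. h p div K \<in> R}) \<le> card (\<Union>A\<in>R. {A * K..<A * K + K})"
    using assms(1) by (intro card_mono) auto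
  also have "\<dots> \<le> (\<Sum>A\<in>R. card {A * K..<A * K + K})" by (rule card_UN_le[OF assms(1)])
  finally show ?thesis
    using assms(3) by (simp add: card_image inj_on_subset mult.commute)
qed

lemma card_pairs_distinct_letters:
  assumes perms: "\<forall>x\<in>set u. \<sigma> x \<in> perms K"
    and lcs: "\<forall>x\<in>set u. \<forall>y\<in>set u. x \<noteq> y \<longrightarrow> LCS (\<sigma> x) (\<sigma> y) \<le> L"
    and match: "twin_matching (concat (map \<sigma> u)) P"
  shows "card {p\<in>P. u ! (fst p div K) \<noteq> u ! (snd p div K)} \<le> 2 * length u * L"
proof -
  define block where "block = (\<lambda>p::nat \<times> nat. (fst p div K, snd p div K))"
  define D where "D = {c\<in>block ` P. u ! fst c \<noteq> u ! snd c}"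
  have P: "finite P" "strict_chain P" using match unfolding twin_matching_def by auto
  have in_range: "\<forall>c\<in>block ` P. fst c < length u \<and> snd c < length u"
    using twin_matching_concat_perms_pair[OF perms match] unfolding block_def by fastforce
  have "{p\<in>P. u ! (fst p div K) \<noteq> u ! (snd p div K)} = (\<Union>c\<in>D. {p\<in>P. block p = c})"
    unfolding D_def block_def by auto
  also have "card \<dots> \<le> (\<Sum>c\<in>D. card {p\<in>P. block p = c})"
    using P(1) unfolding D_def by (intro card_UN_le) simp
  also have "\<dots> \<le> (\<Sum>c\<in>D. L)"
  proof (rule sum_mono)
    fix c assume c: "c \<in> D"
    have "{p\<in>P. block p = c} = {p\<in>P. fst p div K = fst c \<and> snd p div K = snd c}"
      unfolding block_def by auto
    then have "card {p\<in>P. block p = c} \<le> LCS (\<sigma> (u ! fst c)) (\<sigma> (u ! snd c))"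
      using card_block_pairs_le_LCS[OF perms match] by simp
    also have "\<dots> \<le> L" using lcs c in_range unfolding D_def by auto
    finally show "card {p\<in>P. block p = c} \<le> L" .
  qed
  also have "\<dots> \<le> card (block ` P) * L"
    using P(1) unfolding D_def by (simp add: card_mono)
  also have "\<dots> \<le> 2 * length u * L"
  proof -
    have "weak_chain (block ` P)"
      unfolding block_def by (rule strict_chain_blocks_weak_chain[OF P(2)])
    then show ?thesis using card_weak_chain_le[OF _ in_range] by simp
  qed
  finally show ?thesis .
qed

text \<open>Pairs between blocks carrying the same letter of \<open>u\<close> are charged to a twin matching of
  \<open>u\<close> itself: the covering rows and columns consist of \<open>K\<close> positions each.\<close>

lemma card_pairs_equal_letters:
  assumes "K > 0" and perms: "\<forall>x\<in>set u. \<sigma> x \<in> perms K"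
    and match: "twin_matching (concat (map \<sigma> u)) P"
  shows "\<exists>P'. twin_matching u P' \<and> card {p\<in>P. u ! (fst p div K) = u ! (snd p div K)} \<le> K * card P'"
proof -
  define block where "block = (\<lambda>p::nat \<times> nat. (fst p div K, snd p div K))"
  define E where "E = {c\<in>block ` P. u ! fst c = u ! snd c}"
  have P: "finite P" "strict_chain P" using match unfolding twin_matching_def by auto
  have "weak_chain E"
    using strict_chain_blocks_weak_chain[OF P(2)] unfolding E_def block_def
    by (rule weak_chain_subset) auto
  then obtain S R C where S: "S \<subseteq> E" "strict_chain S" "finite S"
    and RC: "finite R" "finite C" "card R + card C \<le> card S" "\<forall>c\<in>E. fst c \<in> R \<or> snd c \<in> C"
    using weak_chain_cover[of E] P(1) unfolding E_def by auto
  have "twin_matching u S"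
    using S twin_matching_concat_perms_pair[OF perms match]
    unfolding twin_matching_def E_def block_def by fastforce
  moreover have "card {p\<in>P. u ! (fst p div K) = u ! (snd p div K)} \<le> K * card S"
  proof -
    have "{p\<in>P. u ! (fst p div K) = u ! (snd p div K)}
        \<subseteq> {p\<in>P. fst p div K \<in> R} \<union> {p\<in>P. snd p div K \<in> C}"
      using RC(4) unfolding E_def block_def by auto
    then have "card {p\<in>P. u ! (fst p div K) = u ! (snd p div K)}
        \<le> card ({p\<in>P. fst p div K \<in> R} \<union> {p\<in>P. snd p div K \<in> C})"
      using P(1) by (intro card_mono) auto
    also have "\<dots> \<le> K * card R + K * card C"
      using card_Un_le card_div_mem_le[OF RC(1) \<open>K > 0\<close> strict_chain_inj_on_fst[OF P(2)]]
        card_div_mem_le[OF RC(2) \<open>K > 0\<close> strict_chain_inj_on_snd[OF P(2)]]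
      by (meson add_mono order_trans)
    also have "\<dots> \<le> K * card S" using RC(3) by (simp flip: add_mult_distrib2)
    finally show ?thesis .
  qed
  ultimately show ?thesis by blast
qed

lemma twin_matching_concat_perms:
  assumes perms: "\<forall>x\<in>set u. \<sigma> x \<in> perms K"
    and lcs: "\<forall>x\<in>set u. \<forall>y\<in>set u. x \<noteq> y \<longrightarrow> LCS (\<sigma> x) (\<sigma> y) \<le> L"
    and match: "twin_matching (concat (map \<sigma> u)) P"
  shows "\<exists>P'. twin_matching u P' \<and> card P \<le> 2 * length u * L + K * card P'"
proof (cases "K = 0")
  case True
  then have "P = {}"
    using twin_matching_concat_perms_pair[OF perms match] by fastforce
  moreover have "twin_matching u {}" by (simp add: twin_matching_def strict_chain_def)
  ultimately show ?thesis by auto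
next
  case False
  then obtain P' where P': "twin_matching u P'"
    "card {p\<in>P. u ! (fst p div K) = u ! (snd p div K)} \<le> K * card P'"
    using card_pairs_equal_letters[OF _ perms match] by blast
  have "card P \<le> card {p\<in>P. u ! (fst p div K) \<noteq> u ! (snd p div K)}
      + card {p\<in>P. u ! (fst p div K) = u ! (snd p div K)}"
    by (rule order_trans[OF _ card_Un_le]) (rule eq_imp_le, rule arg_cong[where f = card], auto)
  with P' card_pairs_distinct_letters[OF perms lcs match] show ?thesis by fastforce
qed

section \<open>Codes attaining \<open>LCS\<^sub>2(2K, \<P>\<^sub>K)\<close>\<close>

lemma two_mult_le_fact: "3 \<le> k \<Longrightarrow> 2 * k \<le> fact k"
proof (induction k rule: dec_induct)
  case base
  then show ?case by (simp add: fact_numeral)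
next
  case (step n)
  have "2 * Suc n \<le> 2 * n * Suc n" using step.hyps by simp
  also have "\<dots> \<le> fact n * Suc n" using step.IH by (intro mult_le_mono1) simp
  finally show ?case by (simp add: algebra_simps)
qed

lemma perms_eq_permutations_of_set: "perms K = permutations_of_set {1..K}"
  unfolding perms_def permutations_of_set_def by auto

lemma finite_perms: "finite (perms K)"
  by (simp add: perms_eq_permutations_of_set finite_permutations_of_set)

lemma card_perms: "card (perms K) = fact K"
  by (simp add: perms_eq_permutations_of_set)

lemma ex_perm_set_attaining_LCS2:
  assumes "3 \<le> K"
  obtains S where "S \<subseteq> perms K" "card S = 2 * K"
    "\<And>p q. p \<in> S \<Longrightarrow> q \<in> S \<Longrightarrow> p \<noteq> q \<Longrightarrow> LCS p q \<le> LCS2_perms (2 * K) K"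
proof -
  define vals where "vals S = {LCS p q | p q. p \<in> S \<and> q \<in> S \<and> p \<noteq> q}" for S
  define SS where "SS = {S. S \<subseteq> perms K \<and> card S = 2 * K}"
  have "2 * K \<le> card (perms K)" using two_mult_le_fact[OF assms] by (simp add: card_perms)
  then obtain T where "T \<subseteq> perms K" "card T = 2 * K" by (rule obtain_subset_with_card_n)
  then have "SS \<noteq> {}" unfolding SS_def by auto
  moreover have "finite SS" unfolding SS_def using finite_perms by simp
  ultimately have "Min ((\<lambda>S. Max (vals S)) ` SS) \<in> (\<lambda>S. Max (vals S)) ` SS" by (intro Min_in) auto
  moreover have "LCS2_perms (2 * K) K = Min ((\<lambda>S. Max (vals S)) ` SS)"
    unfolding LCS2_perms_def vals_def SS_def by (rule arg_cong[where f = Min]) auto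
  ultimately obtain S where S: "S \<in> SS" "LCS2_perms (2 * K) K = Max (vals S)" by auto
  have "finite S" using S(1) finite_perms unfolding SS_def by (auto intro: finite_subset)
  moreover have "vals S \<subseteq> (\<lambda>(p, q). LCS p q) ` (S \<times> S)" unfolding vals_def by auto
  ultimately have "finite (vals S)" by (auto intro: finite_subset)
  then have "LCS p q \<le> LCS2_perms (2 * K) K" if "p \<in> S" "q \<in> S" "p \<noteq> q" for p q
    using that S(2) unfolding vals_def by (auto intro: Max_ge)
  with S(1) that show ?thesis unfolding SS_def by blast
qed

definition is_perm_code :: "nat \<Rightarrow> (nat \<Rightarrow> nat list) \<Rightarrow> bool" where
  "is_perm_code K \<sigma> \<longleftrightarrow> (\<forall>x\<in>{1..2 * K}. \<sigma> x \<in> perms K) \<and>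
     (\<forall>x\<in>{1..2 * K}. \<forall>y\<in>{1..2 * K}. x \<noteq> y \<longrightarrow> LCS (\<sigma> x) (\<sigma> y) \<le> LCS2_perms (2 * K) K)"

definition perm_code :: "nat \<Rightarrow> nat \<Rightarrow> nat list" where
  "perm_code K = (SOME \<sigma>. is_perm_code K \<sigma>)"

lemma is_perm_code_perm_code:
  assumes "3 \<le> K"
  shows "is_perm_code K (perm_code K)"
proof -
  obtain S where S: "S \<subseteq> perms K" "card S = 2 * K"
    "\<And>p q. p \<in> S \<Longrightarrow> q \<in> S \<Longrightarrow> p \<noteq> q \<Longrightarrow> LCS p q \<le> LCS2_perms (2 * K) K"
    using ex_perm_set_attaining_LCS2[OF assms] by blast
  have "finite S" using S(1) finite_perms by (rule finite_subset)
  then obtain h where h: "bij_betw h {1..2 * K} S" using ex_bij_betw_nat_finite_1 S(2) by metis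
  have "h x \<in> S" if "x \<in> {1..2 * K}" for x
    using h that by (auto dest: bij_betwE)
  moreover have "h x \<noteq> h y" if "x \<in> {1..2 * K}" "y \<in> {1..2 * K}" "x \<noteq> y" for x y
    using h that by (metis bij_betw_imp_inj_on inj_onD)
  ultimately have "is_perm_code K h" unfolding is_perm_code_def using S(1,3) by blast
  then show ?thesis unfolding perm_code_def by (rule someI[of "is_perm_code K"])
qed

lemma LCS2_perms_ge_1:
  assumes "3 \<le> K"
  shows "1 \<le> LCS2_perms (2 * K) K"
proof -
  note code = is_perm_code_perm_code[OF assms, unfolded is_perm_code_def]
  have letters: "1 \<in> {1..2 * K}" "2 \<in> {1..2 * K}" using assms by auto
  have "1 \<in> set (perm_code K x)" if "x \<in> {1..2 * K}" for x
    using code that assms unfolding perms_def by auto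
  then have "length [1::nat] \<le> LCS (perm_code K 1) (perm_code K 2)"
    using letters by (intro length_le_LCS) (simp_all add: subseq_singleton_left)
  also have "\<dots> \<le> LCS2_perms (2 * K) K" using code letters by simp
  finally show ?thesis by simp
qed

section \<open>The nested words\<close>

lemma ceil_div_less:
  assumes "2 \<le> K" "K < m"
  shows "(m + K - 1) div K < (m::nat)"
proof -
  have "m * 2 \<le> m * K" using assms by simp
  then have "m + K - 1 < m * K" using assms by linarith
  then show ?thesis using assms by (simp add: div_less_iff_less_mult)
qed

lemma ceil_div_bounds:
  assumes "0 < (K::nat)"
  shows "m \<le> K * ((m + K - 1) div K)" "K * ((m + K - 1) div K) < m + K"
proof -
  have "K * ((m + K - 1) div K) + (m + K - 1) mod K = m + K - 1"
    by (metis div_mult_mod_eq mult.commute)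
  moreover have "(m + K - 1) mod K < K" using assms by simp
  ultimately show "m \<le> K * ((m + K - 1) div K)" "K * ((m + K - 1) div K) < m + K"
    using assms by linarith+
qed

text \<open>\<open>nested_word K m\<close> encodes the word \<open>nested_word (2K) \<lceil>m/K\<rceil>\<close> over \<open>[2K]\<close> letter by letter
  with \<open>perm_code K\<close>; the case \<open>K < 2\<close> only serves termination.\<close>

function nested_word :: "nat \<Rightarrow> nat \<Rightarrow> nat list" where
  "nested_word K m = (if m \<le> K \<or> K < 2 then [1..<m + 1]
     else take m (concat (map (perm_code K) (nested_word (2 * K) ((m + K - 1) div K)))))"
  by pat_completeness auto
termination
  by (relation "measure snd") (use ceil_div_less in auto)

declare nested_word.simps [simp del]

lemma nested_word_unfold:
  "3 \<le> K \<Longrightarrow> K < m \<Longrightarrow>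
     nested_word K m = take m (concat (map (perm_code K) (nested_word (2 * K) ((m + K - 1) div K))))"
  by (simp add: nested_word.simps[of K m])

lemma nested_word_length_set:
  "3 \<le> K \<Longrightarrow> length (nested_word K m) = m \<and> set (nested_word K m) \<subseteq> {1..K}"
proof (induction K m rule: nested_word.induct)
  case (1 K m)
  show ?case
  proof (cases "m \<le> K")
    case True
    then show ?thesis by (auto simp: nested_word.simps[of K m])
  next
    case False
    define u where "u = nested_word (2 * K) ((m + K - 1) div K)"
    have u: "length u = (m + K - 1) div K" "set u \<subseteq> {1..2 * K}"
      using 1 False unfolding u_def by auto
    then have perms: "\<forall>x\<in>set u. perm_code K x \<in> perms K"
      using is_perm_code_perm_code[OF "1.prems"] unfolding is_perm_code_def by blast
    then have "length (concat (map (perm_code K) u)) \<ge> m"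
      using length_concat_map_const[of u "perm_code K" K] ceil_div_bounds(1)[of K m] u(1) "1.prems"
      by (simp add: perms_iff)
    moreover have "set (concat (map (perm_code K) u)) \<subseteq> {1..K}"
      using perms by (auto simp: perms_iff)
    moreover have "nested_word K m = take m (concat (map (perm_code K) u))"
      using False "1.prems" unfolding u_def by (simp add: nested_word_unfold)
    ultimately show ?thesis using set_take_subset by fastforce
  qed
qed

lemma twin_matching_nested_word_short:
  assumes "m \<le> K" "twin_matching (nested_word K m) P"
  shows "P = {}"
proof -
  have "distinct (nested_word K m)" using assms(1) by (simp add: nested_word.simps[of K m])
  moreover have "\<forall>(i, j)\<in>P. i < length (nested_word K m) \<and> j < length (nested_word K m) \<and> i \<noteq> j \<and>
      nested_word K m ! i = nested_word K m ! j"
    using assms(2) unfolding twin_matching_def by simp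
  ultimately show ?thesis using nth_eq_iff_index_eq by fast
qed

lemma twin_matching_take: "twin_matching (take m w) P \<Longrightarrow> twin_matching w P"
  unfolding twin_matching_def by auto

lemma twin_matching_nested_word_step:
  assumes "3 \<le> K" "K < m" and match: "twin_matching (nested_word K m) P"
  shows "\<exists>P'. twin_matching (nested_word (2 * K) ((m + K - 1) div K)) P' \<and>
     card P \<le> 2 * ((m + K - 1) div K) * LCS2_perms (2 * K) K + K * card P'"
proof -
  define q where "q = (m + K - 1) div K"
  define u where "u = nested_word (2 * K) q"
  have u: "length u = q" "set u \<subseteq> {1..2 * K}"
    using nested_word_length_set[of "2 * K"] assms(1) unfolding u_def by auto
  note code = is_perm_code_perm_code[OF assms(1), unfolded is_perm_code_def]
  have letters: "x \<in> {1..2 * K}" if "x \<in> set u" for x using u(2) that by (rule subsetD)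
  have perms: "\<forall>x\<in>set u. perm_code K x \<in> perms K"
    using conjunct1[OF code] letters by (intro ballI) (rule bspec)
  have lcs: "\<forall>x\<in>set u. \<forall>y\<in>set u. x \<noteq> y \<longrightarrow> LCS (perm_code K x) (perm_code K y) \<le> LCS2_perms (2 * K) K"
    using conjunct2[OF code] letters by (intro ballI) (fastforce dest: bspec)
  have "twin_matching (concat (map (perm_code K) u)) P"
    using match twin_matching_take unfolding nested_word_unfold[OF assms(1,2)] u_def q_def by blast
  from twin_matching_concat_perms[OF perms lcs this]
  have "\<exists>P'. twin_matching u P' \<and> card P \<le> 2 * q * LCS2_perms (2 * K) K + K * card P'"
    unfolding u(1) .
  then show ?thesis unfolding u_def q_def .
qed

section \<open>Counting twins in nested words\<close>

lemma two_powr_minus_two_thirds_bounds: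
  "1 / 2 \<le> (2::real) powr (-2/3)" "(2::real) powr (-2/3) \<le> 0.63"
proof -
  have "(2::real) powr (-1) \<le> 2 powr (-2/3)" by (intro powr_mono) auto
  then show "1 / 2 \<le> (2::real) powr (-2/3)" by (simp add: powr_minus)
  have "((2::real) powr (-2/3)) ^ 3 = 2 powr (-2)"
    by (simp add: powr_realpow[symmetric] powr_powr)
  also have "\<dots> = 1 / 4" by (simp add: powr_minus powr_numeral)
  also have "\<dots> < 0.63 ^ 3" by (simp add: power_divide)
  finally have "(2::real) powr (-2/3) < 0.63" by (rule power_less_imp_less_base) simp
  then show "(2::real) powr (-2/3) \<le> 0.63" by simp
qed

text \<open>Uses \<open>L \<le> C K\<^sup>1\<^sup>/\<^sup>3 = C K\<^sup>-\<^sup>2\<^sup>/\<^sup>3 \<cdot> K\<close> and \<open>K \<lceil>m/K\<rceil> < m + K\<close>.\<close>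

lemma card_twin_matching_nested_word_step:
  fixes C a E :: real
  assumes hyp: "\<forall>K\<ge>3. real (LCS2_perms (2 * K) K) \<le> C * real K powr (1/3)"
    and "0 \<le> C" "0 \<le> a" "3 \<le> K" "K < m" and match: "twin_matching (nested_word K m) P"
    and IH: "\<And>P'. twin_matching (nested_word (2 * K) ((m + K - 1) div K)) P' \<Longrightarrow>
               real (card P') \<le> a * real ((m + K - 1) div K) + E"
  shows "real (card P) \<le> (2 * C * real K powr (-2/3) + a) * (real m + real K) + real K * E"
proof -
  define q where "q = (m + K - 1) div K"
  define t where "t = real K powr (-2/3)"
  obtain P' where P': "twin_matching (nested_word (2 * K) q) P'"
    "card P \<le> 2 * q * LCS2_perms (2 * K) K + K * card P'"
    using twin_matching_nested_word_step[OF assms(4,5) match] unfolding q_def by blast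
  have "real K powr (1/3) = real K powr (1 + (-2/3))" by simp
  also have "\<dots> = real K powr 1 * t" unfolding t_def by (rule powr_add)
  also have "\<dots> = real K * t" using assms(4) by simp
  finally have L: "real (LCS2_perms (2 * K) K) \<le> C * t * real K"
    using hyp[rule_format, OF assms(4)] by (simp add: ac_simps)
  have Kq: "real K * real q \<le> real m + real K"
    using ceil_div_bounds(2)[of K m] assms(4) unfolding q_def by (simp flip: of_nat_mult)
  have "real (card P) \<le> real (2 * q * LCS2_perms (2 * K) K + K * card P')"
    using P'(2) by (simp only: of_nat_le_iff)
  also have "\<dots> = 2 * real q * real (LCS2_perms (2 * K) K) + real K * real (card P')" by simp
  also have "\<dots> \<le> 2 * real q * (C * t * real K) + real K * (a * real q + E)"
    using L IH[OF P'(1)[unfolded q_def]] unfolding q_def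
    by (intro add_mono mult_left_mono) auto
  also have "\<dots> = (2 * C * t + a) * (real K * real q) + real K * E" by (simp add: algebra_simps)
  also have "\<dots> \<le> (2 * C * t + a) * (real m + real K) + real K * E"
    using Kq assms(2,3) by (intro add_mono mult_left_mono) (auto simp: t_def)
  finally show ?thesis unfolding t_def .
qed

lemma powr_minus_two_thirds_double: "real (2 * K) powr (-2/3) = 2 powr (-2/3) * real K powr (-2/3)"
  by (simp add: powr_mult)

lemma recursion_coefficient_le_six:
  assumes "20 \<le> K" "2 * K < q" "real K * real q \<le> real m + real K"
  shows "(2 + 6 * 2 powr (-2/3)) * (real m + real K) \<le> 6 * real m"
proof -
  have "real K * (2 * real K + 1) \<le> real K * real q"
    using assms(2) by (intro mult_left_mono) (simp_all flip: of_nat_mult)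
  moreover have "20 * real K \<le> real K * real K"
    using assms(1) by (intro mult_right_mono) simp_all
  ultimately have "40 * real K \<le> real m" using assms(3) by (simp add: algebra_simps)
  moreover have "(2 + 6 * 2 powr (-2/3)) * (real m + real K) \<le> 5.78 * (real m + real K)"
    using two_powr_minus_two_thirds_bounds(2) by (intro mult_right_mono) simp_all
  ultimately show ?thesis by simp
qed

text \<open>From \<open>K \<ge> 20\<close> on, the recursion closes without an additive constant; the threshold
  guarantees \<open>m \<ge> 40 K\<close> whenever level \<open>2K\<close> contributes.\<close>

lemma card_twin_matching_nested_word_large:
  fixes C :: real
  assumes hyp: "\<forall>K\<ge>3. real (LCS2_perms (2 * K) K) \<le> C * real K powr (1/3)" and "0 \<le> C"
  shows "20 \<le> K \<Longrightarrow> twin_matching (nested_word K m) P \<Longrightarrow>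
    real (card P) \<le> 6 * C * real K powr (-2/3) * real m"
proof (induction m arbitrary: K P rule: less_induct)
  case (less m)
  define c where "c = C * real K powr (-2/3)"
  have "0 \<le> c" using assms(2) unfolding c_def by simp
  show ?case
  proof (cases "m \<le> K")
    case True
    then show ?thesis using twin_matching_nested_word_short[OF _ less.prems(2)] \<open>0 \<le> c\<close>
      unfolding c_def by simp
  next
    case False
    define q where "q = (m + K - 1) div K"
    have q: "q < m" "real K * real q \<le> real m + real K"
      using ceil_div_less[of K m] ceil_div_bounds(2)[of K m] False less.prems(1)
      unfolding q_def by (auto simp flip: of_nat_mult)
    consider "q \<le> 2 * K" | "2 * K < q" by linarith
    then show ?thesis
    proof cases
      case 1
      have IH: "real (card P') \<le> 0 * real ((m + K - 1) div K) + 0"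
        if "twin_matching (nested_word (2 * K) ((m + K - 1) div K)) P'" for P'
        using twin_matching_nested_word_short[OF _ that] 1 unfolding q_def by simp
      have "real (card P) \<le> (2 * C * real K powr (-2/3) + 0) * (real m + real K) + real K * 0"
        by (rule card_twin_matching_nested_word_step[OF hyp assms(2) _ _ _ less.prems(2) IH])
          (use False less.prems(1) in auto)
      also have "\<dots> = 2 * c * (real m + real K)" unfolding c_def by simp
      also have "\<dots> \<le> 2 * c * (3 * real m)"
        using False \<open>0 \<le> c\<close> by (intro mult_left_mono) auto
      finally show ?thesis unfolding c_def by (simp add: ac_simps)
    next
      case 2
      let ?r = "(2::real) powr (-2/3)"
      have IH: "real (card P') \<le> 6 * C * ?r * real K powr (-2/3) * real ((m + K - 1) div K) + 0"
        if "twin_matching (nested_word (2 * K) ((m + K - 1) div K)) P'" for P'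
        using less.IH[OF q(1) _ that[folded q_def]] less.prems(1) powr_minus_two_thirds_double[of K]
        by (simp add: q_def)
      have "real (card P) \<le> (2 * C * real K powr (-2/3) + 6 * C * ?r * real K powr (-2/3))
          * (real m + real K) + real K * 0"
        by (rule card_twin_matching_nested_word_step[OF hyp assms(2) _ _ _ less.prems(2) IH])
          (use False less.prems(1) assms(2) in auto)
      also have "\<dots> = c * ((2 + 6 * ?r) * (real m + real K))" unfolding c_def by (simp add: algebra_simps)
      also have "\<dots> \<le> c * (6 * real m)"
        using recursion_coefficient_le_six[OF less.prems(1) 2 q(2)] \<open>0 \<le> c\<close> by (rule mult_left_mono)
      also have "\<dots> = 6 * c * real m" by simp
      finally show ?thesis unfolding c_def by (simp add: ac_simps)
    qed
  qed
qed

lemma card_twin_matching_nested_word: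
  fixes C :: real
  assumes hyp: "\<forall>K\<ge>3. real (LCS2_perms (2 * K) K) \<le> C * real K powr (1/3)" and "0 \<le> C"
  shows "3 \<le> K \<Longrightarrow> \<exists>E. \<forall>m P. twin_matching (nested_word K m) P \<longrightarrow>
    real (card P) \<le> 6 * C * real K powr (-2/3) * real m + E"
proof (induction "20 - K" arbitrary: K rule: less_induct)
  case less
  show ?case
  proof (cases "20 \<le> K")
    case True
    then have "\<forall>m P. twin_matching (nested_word K m) P \<longrightarrow>
        real (card P) \<le> 6 * C * real K powr (-2/3) * real m + 0"
      using card_twin_matching_nested_word_large[OF hyp assms(2)] by simp
    then show ?thesis by blast
  next
    case False
    then have "20 - 2 * K < 20 - K" "3 \<le> 2 * K" using less.prems by auto
    then obtain E' where E': "\<forall>m P. twin_matching (nested_word (2 * K) m) P \<longrightarrow>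
        real (card P) \<le> 6 * C * real (2 * K) powr (-2/3) * real m + E'"
      using less.hyps[of "2 * K"] by blast
    define c where "c = C * real K powr (-2/3)"
    have "0 \<le> c" using assms(2) unfolding c_def by simp
    have "real (card P) \<le> 6 * c * real m + (6 * c * real K + real K * \<bar>E'\<bar>)"
      if match: "twin_matching (nested_word K m) P" for m P
    proof (cases "m \<le> K")
      case True
      then show ?thesis using twin_matching_nested_word_short[OF _ match] \<open>0 \<le> c\<close> by simp
    next
      case False
      let ?r = "(2::real) powr (-2/3)"
      have IH: "real (card P') \<le> 6 * C * ?r * real K powr (-2/3) * real ((m + K - 1) div K) + \<bar>E'\<bar>"
        if "twin_matching (nested_word (2 * K) ((m + K - 1) div K)) P'" for P'
        using E' that powr_minus_two_thirds_double[of K] by fastforce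
      have "real (card P) \<le> (2 * C * real K powr (-2/3) + 6 * C * ?r * real K powr (-2/3))
          * (real m + real K) + real K * \<bar>E'\<bar>"
        by (rule card_twin_matching_nested_word_step[OF hyp assms(2) _ less.prems _ match IH])
          (use False assms(2) in auto)
      also have "\<dots> = (2 + 6 * ?r) * c * (real m + real K) + real K * \<bar>E'\<bar>"
        unfolding c_def by (simp add: algebra_simps)
      also have "\<dots> \<le> 6 * c * (real m + real K) + real K * \<bar>E'\<bar>"
        using two_powr_minus_two_thirds_bounds(2) \<open>0 \<le> c\<close>
        by (intro add_mono mult_right_mono) (auto intro: mult_right_mono)
      finally show ?thesis by (simp add: algebra_simps)
    qed
    then show ?thesis unfolding c_def mult.assoc by blast
  qed
qed

section \<open>The bound on \<open>LT(k, n)\<close>\<close>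

lemma one_le_three_mult_of_LCS2_bound:
  fixes C :: real
  assumes hyp: "\<forall>K\<ge>3. real (LCS2_perms (2 * K) K) \<le> C * real K powr (1/3)"
  shows "1 \<le> 3 * C"
proof -
  have one: "1 \<le> C * 3 powr (1/3)"
    using hyp[rule_format, of 3] LCS2_perms_ge_1[of 3] by simp
  have pos: "0 < (3::real) powr (1/3)" by simp
  have "0 < C"
  proof (rule ccontr)
    assume "\<not> 0 < C"
    then have "C * 3 powr (1/3) \<le> 0" using pos by (simp add: mult_nonpos_nonneg)
    with one show False by simp
  qed
  moreover have "(3::real) powr (1/3) \<le> 3" using powr_mono[of "1/3" 1 "3::real"] by simp
  ultimately have "C * 3 powr (1/3) \<le> C * 3" by simp
  with one show ?thesis by simp
qed

lemma two_mult_LT_kn_le: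
  assumes "1 \<le> k"
  shows "2 * LT_kn k n \<le> n"
proof -
  have "set (replicate n 1) \<subseteq> {1..k}" using assms by auto
  then have "LT_kn k n \<le> LT (replicate n 1)" by (intro LT_kn_le_LT) simp_all
  with two_LT_le_length[of "replicate n 1"] show ?thesis by simp
qed

lemma LT_kn_2_le:
  fixes C :: real
  assumes "1 \<le> 3 * C"
  shows "real (LT_kn 2 n) \<le> 6 * C * 2 powr (-2/3) * real n"
proof -
  have "real (LT_kn 2 n) \<le> 1 * real n" using two_mult_LT_kn_le[of 2 n] by simp
  also have "\<dots> \<le> 3 * C * real n" using assms by (rule mult_right_mono) simp
  also have "\<dots> \<le> 6 * C * 2 powr (-2/3) * real n"
    using two_powr_minus_two_thirds_bounds(1) assms by (intro mult_right_mono) auto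
  finally show ?thesis .
qed

lemma LT_kn_le_of_nested_word_bound:
  assumes "3 \<le> k"
    and bound: "\<forall>m P. twin_matching (nested_word k m) P \<longrightarrow> real (card P) \<le> a * real m + E"
  shows "real (LT_kn k n) \<le> a * real n + E"
proof -
  obtain P where "twin_matching (nested_word k n) P" "card P = LT (nested_word k n)"
    using LT_twin_matching by blast
  moreover have "LT_kn k n \<le> LT (nested_word k n)"
    using nested_word_length_set[OF assms(1)] by (intro LT_kn_le_LT) auto
  ultimately show ?thesis using bound by (metis of_nat_le_iff order_trans)
qed

lemma const_smallo_real: "(\<lambda>n::nat. E) \<in> o[at_top](\<lambda>n. real n)"
proof (rule smalloI_tendsto)
  show "((\<lambda>n::nat. E / real n) \<longlongrightarrow> 0) at_top" by (rule lim_const_over_n)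
  show "\<forall>\<^sub>F n in at_top. real n \<noteq> 0" using eventually_gt_at_top[of "0::nat"] by eventually_elim simp
qed

theorem theorem8:
  fixes C :: real
  assumes hyp: "\<forall>k::nat. k \<ge> 1 \<and> 2 * k \<le> fact k \<longrightarrow>
                   real (LCS2_perms (2 * k) k) \<le> C * real k powr (1/3)"
  shows "\<forall>k::nat. k \<ge> 2 \<longrightarrow>
           (\<exists>g. g \<in> o[at_top](\<lambda>n. real n) \<and>
              (\<forall>n. real (LT_kn k n) \<le> 6 * C * real k powr (-2/3) * real n + g n))"
proof (intro allI impI)
  fix k :: nat assume "k \<ge> 2"
  have hyp3: "\<forall>K\<ge>3. real (LCS2_perms (2 * K) K) \<le> C * real K powr (1/3)"
    by (intro allI impI hyp[rule_format] conjI) (simp_all add: two_mult_le_fact)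
  have C: "1 \<le> 3 * C" by (rule one_le_three_mult_of_LCS2_bound[OF hyp3])
  have "\<exists>E. \<forall>n. real (LT_kn k n) \<le> 6 * C * real k powr (-2/3) * real n + E"
  proof (cases "k = 2")
    case True
    then show ?thesis using LT_kn_2_le[OF C] by (intro exI[of _ 0]) simp
  next
    case False
    with \<open>k \<ge> 2\<close> have "3 \<le> k" by simp
    moreover have "0 \<le> C" using C by simp
    ultimately obtain E where E: "\<forall>m P. twin_matching (nested_word k m) P \<longrightarrow>
        real (card P) \<le> 6 * C * real k powr (-2/3) * real m + E"
      using card_twin_matching_nested_word[OF hyp3] by blast
    show ?thesis by (intro exI[of _ E] allI LT_kn_le_of_nested_word_bound[OF \<open>3 \<le> k\<close> E])
  qed
  then show "\<exists>g. g \<in> o[at_top](\<lambda>n. real n) \<and>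
      (\<forall>n. real (LT_kn k n) \<le> 6 * C * real k powr (-2/3) * real n + g n)"
    using const_smallo_real by blast
qed

end
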